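(* Let $\nu\in\mathcal P^{(n)}_0$ be minimal and let $i\in\{1,\dots,n-1\}$ satisfy $\sigma_\nu^{-1}(i)<\sigma_\nu^{-1}(i+1)$. Let $\nu^{(i)}$ be the unique minimal partition in $\mathcal P^{(n)}_0$ with $\sigma_{\nu^{(i)}}=s_i\circ\sigma_\nu$, where $s_i=(i,i+1)\in\mathfrak S_n$. Then for every $j=1,\dots,n-1$, $$\beta_j(\nu^{(i)})=r_{\alpha_i}(\beta_j(\nu))\quad\text{or}\quad\beta_j(\nu^{(i)})=r_{\alpha_i}(\beta_j(\nu))+\delta.$$
   Context: Fix $n\ge3$. Root lattice: let $Q=\bigoplus_{i=0}^{n-1}\mathbb Z\alpha_i$ be the root lattice of $\widehat{\mathfrak{sl}}_n$, with indices of $\alpha$ taken mod $n$ (so $\alpha_n=\alpha_0$). Its bilinear form is $(\alpha_i,\alpha_j)=a_{ij}$, where $a_{ii}=2$, $a_{i,i\pm1}=-1$ and $a_{ij}=0$ otherwise (indices mod $n$). Let $\delta=\alpha_0+\dots+\alpha_{n-1}$ and $r_{\alpha_i}(\beta)=\beta-(\beta,\alpha_i)\alpha_i$. Colorless partitions: a partition $\nu$ is $n$-colorless if for every residue $i$ mod $n$ the number of boxes $(x,y)$ ($\nu_x\ge y$) with $x-y\equiv i$ is the same. Let $\nu'$ be the conjugate partition. Let $\mathcal P^{(n)}_0$ be the set of $n$-colorless partitions $\nu$ with $\nu_1\le n$ and $\nu'_n<n$. Associated data for $\nu\in\mathcal P^{(n)}_0$: - The values $\nu'_m+1-m$, $m=1,\dots,n$,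 are pairwise distinct mod $n$. Define $\sigma_\nu\in\mathfrak S_n$ by $\sigma_\nu(n-m+1)=\overline{\nu'_m+1-m}$, where $\overline a\in\{1,\dots,n\}$ denotes the representative of $a$ mod $n$. - For $i=1,\dots,n-1$ put $\beta_i(\nu)=\alpha_{\nu'_{i+1}-i}+\alpha_{\nu'_{i+1}-i+1}+\dots+\alpha_{\nu'_i-i}$, a sum of $\nu'_i-\nu'_{i+1}+1$ consecutive simple roots with indices mod $n$. Minimality: $\nu$ is called minimal if $\nu'_i<\nu'_{i+1}+n-1$ for all $i=1,\dots,n-1$. For each $\sigma\in\mathfrak S_n$ there is a unique minimal $\nu\in\mathcal P^{(n)}_0$ with $\sigma_\nu=\sigma$. *)

theory Defs
  imports "HOL-Combinatorics.Transposition"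
begin

(* Partitions: weakly decreasing lists of positive naturals; nu_x = part nu x (1-indexed). *)
definition is_partition :: "nat list \<Rightarrow> bool" where
  "is_partition \<nu> \<longleftrightarrow> sorted_wrt (\<ge>) \<nu> \<and> (\<forall>p\<in>set \<nu>. 0 < p)"

definition part :: "nat list \<Rightarrow> nat \<Rightarrow> nat" where
  "part \<nu> x = (if 1 \<le> x \<and> x \<le> length \<nu> then \<nu> ! (x - 1) else 0)"

definition conj :: "nat list \<Rightarrow> nat \<Rightarrow> nat" where
  "conj \<nu> m = card {x. 1 \<le> x \<and> m \<le> part \<nu> x}"

definition boxes :: "nat list \<Rightarrow> (nat \<times> nat) set" where
  "boxes \<nu> = {(x, y). 1 \<le> x \<and> 1 \<le> y \<and> y \<le> part \<nu> x}"

definition color_count :: "nat \<Rightarrow> nat list \<Rightarrow> int \<Rightarrow> nat" where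
  "color_count n \<nu> i = card {(x, y) \<in> boxes \<nu>. (int x - int y) mod int n = i mod int n}"

definition colorless :: "nat \<Rightarrow> nat list \<Rightarrow> bool" where
  "colorless n \<nu> \<longleftrightarrow> (\<forall>i j. color_count n \<nu> i = color_count n \<nu> j)"

definition P0 :: "nat \<Rightarrow> nat list set" where
  "P0 n = {\<nu>. is_partition \<nu> \<and> colorless n \<nu> \<and> part \<nu> 1 \<le> n \<and> conj \<nu> n < n}"

definition rep :: "nat \<Rightarrow> int \<Rightarrow> nat" where
  "rep n a = nat ((a - 1) mod int n) + 1"

(* sigma_nu as a permutation of {1..n}, extended by the identity outside {1..n} *)
definition sigma :: "nat \<Rightarrow> nat list \<Rightarrow> nat \<Rightarrow> nat" where
  "sigma n \<nu> k = (if 1 \<le> k \<and> k \<le> n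
      then rep n (int (conj \<nu> (n + 1 - k)) + 1 - int (n + 1 - k)) else k)"

definition minimal :: "nat \<Rightarrow> nat list \<Rightarrow> bool" where
  "minimal n \<nu> \<longleftrightarrow> (\<forall>i\<in>{1..n-1}. conj \<nu> i < conj \<nu> (i + 1) + n - 1)"

(* Root lattice Q = Z^n: elements are coefficient vectors c :: nat => int,
   c k = coefficient of alpha_k for k < n, and 0 for k >= n. *)
type_synonym rootlat = "nat \<Rightarrow> int"

definition alpha :: "nat \<Rightarrow> int \<Rightarrow> rootlat" where
  "alpha n t = (\<lambda>k. if k = nat (t mod int n) then 1 else 0)"

definition delta :: "nat \<Rightarrow> rootlat" where
  "delta n = (\<lambda>k. if k < n then 1 else 0)"

definition cartan :: "nat \<Rightarrow> nat \<Rightarrow> nat \<Rightarrow> int" where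
  "cartan n k l = (if k = l then 2
     else if (k + 1) mod n = l \<or> (l + 1) mod n = k then -1 else 0)"

definition form :: "nat \<Rightarrow> rootlat \<Rightarrow> rootlat \<Rightarrow> int" where
  "form n b c = (\<Sum>k<n. \<Sum>l<n. b k * c l * cartan n k l)"

definition refl :: "nat \<Rightarrow> int \<Rightarrow> rootlat \<Rightarrow> rootlat" where
  "refl n i b = (\<lambda>k. b k - form n b (alpha n i) * alpha n i k)"

definition beta :: "nat \<Rightarrow> nat list \<Rightarrow> nat \<Rightarrow> rootlat" where
  "beta n \<nu> i = (\<lambda>k. \<Sum>t\<in>{int (conj \<nu> (i+1)) - int i .. int (conj \<nu> i) - int i}. alpha n t k)"

definition qadd :: "rootlat \<Rightarrow> rootlat \<Rightarrow> rootlat" where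
  "qadd b c = (\<lambda>k. b k + c k)"

end

theory Submission
  imports Defs
begin

text \<open>
  With \<open>o\<^sub>m(\<nu>) = \<nu>'\<^sub>m + 1 - m\<close>, the root \<open>\<beta>\<^sub>j(\<nu>)\<close> is the segment
  \<open>\<alpha>\<^sub>p + \<dots> + \<alpha>\<^sub>q\<^sub>-\<^sub>1\<close> of the \<open>n\<close>-periodic sequence of simple roots, where
  \<open>p = o\<^sub>j\<^sub>+\<^sub>1(\<nu>)\<close> and \<open>q = o\<^sub>j(\<nu>)\<close>; minimality gives \<open>1 \<le> q - p \<le> n - 1\<close>. Writing
  such segments as differences of prefix sums shows that \<open>r\<^sub>\<alpha>\<^sub>i\<close> maps the segment \<open>[p, q)\<close>
  to \<open>[s p, s q)\<close>, where \<open>s\<close> is the affine permutation of \<open>\<int>\<close> exchanging \<open>i + kn\<close> and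
  \<open>i + 1 + kn\<close>. Colourlessness makes the residues of the \<open>o\<^sub>m(\<nu>)\<close> distinct, so
  \<open>\<sigma>\<^sub>\<nu>\<close> is a permutation and \<open>\<sigma>\<^sub>\<mu> = s\<^sub>i \<circ> \<sigma>\<^sub>\<nu>\<close> means
  \<open>o\<^sub>m(\<mu>) \<equiv> s (o\<^sub>m(\<nu>)) mod n\<close>. Hence \<open>\<beta>\<^sub>j(\<mu>)\<close> is the segment \<open>[s p, s q)\<close> with
  both ends moved by multiples of \<open>n\<close>. The ascent of \<open>\<sigma>\<^sub>\<nu>\<close> at \<open>i\<close> keeps \<open>s q - s p\<close>
  in \<open>[-1, n]\<close>, and as \<open>\<beta>\<^sub>j(\<mu>)\<close> again has length in \<open>[1, n - 1]\<close>, the upper end is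
  moved by the same multiple of \<open>n\<close> as the lower one or by one period more, which adds \<open>\<delta>\<close>.
\<close>

section \<open>Conjugate partitions and colour counts\<close>

lemma part_antimono:
  assumes "is_partition \<nu>" "1 \<le> x" "x \<le> y"
  shows "part \<nu> y \<le> part \<nu> x"
proof (cases "x < y \<and> y \<le> length \<nu>")
  case True
  then have lt: "x - 1 < y - 1" "y - 1 < length \<nu>" using assms(2) by auto
  have "sorted_wrt (\<ge>) \<nu>" using assms(1) unfolding is_partition_def by simp
  from sorted_wrt_nth_less[OF this lt] have "\<nu> ! (y - 1) \<le> \<nu> ! (x - 1)" by simp
  then show ?thesis using True assms by (simp add: part_def)
next
  case False
  then have "x = y \<or> length \<nu> < y" using assms(3) by linarith
  then show ?thesis by (auto simp: part_def)
qed

lemma down_closed_eq_atLeastAtMost: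
  fixes S :: "nat set"
  assumes "finite S" "\<And>x. x \<in> S \<Longrightarrow> 1 \<le> x"
    and "\<And>x y. x \<in> S \<Longrightarrow> 1 \<le> y \<Longrightarrow> y \<le> x \<Longrightarrow> y \<in> S"
  shows "S = {1..card S}"
proof (cases "S = {}")
  case False
  then have "Max S \<in> S" using assms(1) by simp
  have S: "S = {1..Max S}"
  proof
    show "S \<subseteq> {1..Max S}" using assms(1,2) by auto
    show "{1..Max S} \<subseteq> S" using assms(3)[OF \<open>Max S \<in> S\<close>] by auto
  qed
  have "card S = Max S" by (subst S) simp
  then show ?thesis using S by simp
qed simp

lemma column_eq:
  assumes "is_partition \<nu>" "1 \<le> m"
  shows "{x. 1 \<le> x \<and> m \<le> part \<nu> x} = {1..conj \<nu> m}"
  unfolding conj_def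
proof (rule down_closed_eq_atLeastAtMost)
  show "finite {x. 1 \<le> x \<and> m \<le> part \<nu> x}"
    by (rule finite_subset[of _ "{1..length \<nu>}"]) (use assms(2) in \<open>auto simp: part_def\<close>)
next
  fix x y assume "x \<in> {x. 1 \<le> x \<and> m \<le> part \<nu> x}" "1 \<le> y" "y \<le> x"
  then show "y \<in> {x. 1 \<le> x \<and> m \<le> part \<nu> x}" using part_antimono[OF assms(1), of y x] by simp
qed simp

lemma conj_antimono:
  assumes "is_partition \<nu>" "1 \<le> m"
  shows "conj \<nu> (m + 1) \<le> conj \<nu> m"
proof -
  have "{x. 1 \<le> x \<and> m + 1 \<le> part \<nu> x} \<subseteq> {x. 1 \<le> x \<and> m \<le> part \<nu> x}" by auto
  then have "{1..conj \<nu> (m + 1)} \<subseteq> {1..conj \<nu> m}"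
    by (simp only: column_eq[OF assms] column_eq[OF assms(1), of "m + 1"] le_add2)
  then show ?thesis by (cases "conj \<nu> (m + 1) = 0") auto
qed

lemma boxes_eq_columns:
  assumes "is_partition \<nu>" "part \<nu> 1 \<le> n"
  shows "boxes \<nu> = {(x, y). y \<in> {1..n} \<and> x \<in> {1..conj \<nu> y}}"
proof -
  have "y \<le> n" if "1 \<le> x" "y \<le> part \<nu> x" for x y
    using part_antimono[OF assms(1) order_refl that(1)] that assms(2) by linarith
  moreover have "(1 \<le> x \<and> y \<le> part \<nu> x) = (x \<in> {1..conj \<nu> y})" if "1 \<le> y" for x y
    using column_eq[OF assms(1) that] by blast
  ultimately show ?thesis
    unfolding boxes_def by auto
qed

definition column_count :: "nat \<Rightarrow> nat \<Rightarrow> nat \<Rightarrow> int \<Rightarrow> nat" where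
  "column_count n c y r = card {x \<in> {1..c}. (int x - int y) mod int n = r mod int n}"

lemma color_count_eq_sum_columns:
  assumes "is_partition \<nu>" "part \<nu> 1 \<le> n"
  shows "color_count n \<nu> r = (\<Sum>y\<in>{1..n}. column_count n (conj \<nu> y) y r)"
proof -
  let ?C = "\<lambda>y. {x \<in> {1..conj \<nu> y}. (int x - int y) mod int n = r mod int n}"
  have "{(x, y) \<in> boxes \<nu>. (int x - int y) mod int n = r mod int n} = (\<lambda>(y, x). (x, y)) ` Sigma {1..n} ?C"
    unfolding boxes_eq_columns[OF assms] by auto
  moreover have "inj_on (\<lambda>(y, x). (x, y)) (Sigma {1..n} ?C)"
    by (auto simp: inj_on_def)
  ultimately have "color_count n \<nu> r = card (Sigma {1..n} ?C)"
    unfolding color_count_def by (simp add: card_image)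
  also have "\<dots> = (\<Sum>y\<in>{1..n}. card (?C y))"
    by (rule card_SigmaI) auto
  finally show ?thesis unfolding column_count_def .
qed

text \<open>The contents of the boxes of a column of height \<open>c\<close> at position \<open>y\<close> form the interval
  \<open>[1 - y, c - y]\<close>, so residue counts of neighbouring colours differ only at its two ends.\<close>
lemma column_count_diff:
  "int (column_count n c y r) - int (column_count n c y (r + 1))
     = of_bool ((int c + 1 - int y) mod int n = (r + 1) mod int n)
       - of_bool ((1 - int y) mod int n = (r + 1) mod int n)"
proof (induction c)
  case (Suc c)
  have "{x \<in> {1..Suc c}. P x} = (if P (Suc c) then insert (Suc c) else id) {x \<in> {1..c}. P x}"
    for P by (auto simp: le_Suc_eq)
  then have step: "int (card {x \<in> {1..Suc c}. P x}) = int (card {x \<in> {1..c}. P x}) + of_bool (P (Suc c))"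
    for P by simp
  have "int (column_count n (Suc c) y r) - int (column_count n (Suc c) y (r + 1))
      = int (column_count n c y r) - int (column_count n c y (r + 1))
        + of_bool ((int (Suc c) - int y) mod int n = r mod int n)
        - of_bool ((int (Suc c) - int y) mod int n = (r + 1) mod int n)"
    unfolding column_count_def step by simp
  moreover have "(int (Suc c) - int y) mod int n = r mod int n
      \<longleftrightarrow> (int (Suc c) + 1 - int y) mod int n = (r + 1) mod int n"
    by (simp add: mod_eq_dvd_iff algebra_simps)
  ultimately show ?case using Suc.IH by (simp add: algebra_simps)
qed (simp add: column_count_def)

lemma eq_if_diff_mod_eq:
  fixes a :: int
  assumes "y \<in> {1..n}" "y' \<in> {1..n}" "(a - int y) mod int n = (a - int y') mod int n"
  shows "y = y'"
proof -
  have "int n dvd int y' - int y" using assms(3) by (simp add: mod_eq_dvd_iff)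
  moreover have "\<bar>int y' - int y\<bar> < \<bar>int n\<bar>" using assms(1,2) by auto
  ultimately have "int y' - int y = 0" using dvd_imp_le_int by (metis linorder_not_le)
  then show ?thesis by simp
qed

lemma card_residue_eq_one:
  fixes a s :: int
  assumes "n > 0"
  shows "card {y \<in> {1..n}. (a - int y) mod int n = s mod int n} = 1"
proof -
  define y0 where "y0 = nat ((a - s - 1) mod int n) + 1"
  have "0 \<le> (a - s - 1) mod int n" "(a - s - 1) mod int n < int n" using assms by auto
  then have y0: "y0 \<in> {1..n}" "int y0 = (a - s - 1) mod int n + 1" unfolding y0_def by auto
  have y0_mod: "(a - int y0) mod int n = s mod int n"
    unfolding y0(2) mod_eq_dvd_iff using dvd_minus_mod[of "int n" "a - s - 1"] by (simp add: algebra_simps)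
  have "{y \<in> {1..n}. (a - int y) mod int n = s mod int n} = {y0}"
  proof (intro equalityI subsetI)
    fix y assume "y \<in> {y \<in> {1..n}. (a - int y) mod int n = s mod int n}"
    then show "y \<in> {y0}" using eq_if_diff_mod_eq[of y n y0 a] y0(1) y0_mod by simp
  qed (use y0(1) y0_mod in simp)
  then show ?thesis by simp
qed

definition conj_offset :: "nat list \<Rightarrow> nat \<Rightarrow> int" where
  "conj_offset \<nu> m = int (conj \<nu> m) + 1 - int m"

lemma card_conj_offset_residue:
  assumes "\<nu> \<in> P0 n" "n > 0"
  shows "card {y \<in> {1..n}. conj_offset \<nu> y mod int n = s mod int n} = 1"
proof -
  have \<nu>: "is_partition \<nu>" "part \<nu> 1 \<le> n" "colorless n \<nu>"
    using assms(1) unfolding P0_def by auto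
  let ?cc = "\<lambda>r y. int (column_count n (conj \<nu> y) y r)"
  have "color_count n \<nu> (s - 1) = color_count n \<nu> s"
    using \<nu>(3) unfolding colorless_def by blast
  then have "(\<Sum>y\<in>{1..n}. ?cc (s - 1) y) = (\<Sum>y\<in>{1..n}. ?cc s y)"
    unfolding color_count_eq_sum_columns[OF \<nu>(1,2)] of_nat_sum[symmetric] by simp
  then have "(\<Sum>y\<in>{1..n}. ?cc (s - 1) y - ?cc s y) = 0"
    by (simp add: sum_subtractf)
  then have "(\<Sum>y\<in>{1..n}. of_bool (conj_offset \<nu> y mod int n = s mod int n)
      - of_bool ((1 - int y) mod int n = s mod int n) :: int) = 0"
    using column_count_diff[of n _ _ "s - 1"] by (simp add: conj_offset_def)
  then have "(\<Sum>y\<in>{1..n}. of_bool (conj_offset \<nu> y mod int n = s mod int n) :: int)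
      = (\<Sum>y\<in>{1..n}. of_bool ((1 - int y) mod int n = s mod int n))"
    by (simp add: sum_subtractf)
  then show ?thesis
    using card_residue_eq_one[OF assms(2), of 1 s] by (simp add: Int_def)
qed

lemma conj_offset_mod_inj:
  assumes "\<nu> \<in> P0 n" "y \<in> {1..n}" "y' \<in> {1..n}"
    and "conj_offset \<nu> y mod int n = conj_offset \<nu> y' mod int n"
  shows "y = y'"
proof -
  have "n > 0" using assms(2) by simp
  from card_conj_offset_residue[OF assms(1) this]
  obtain z where "{x \<in> {1..n}. conj_offset \<nu> x mod int n = conj_offset \<nu> y' mod int n} = {z}"
    by (rule card_1_singletonE)
  moreover have "y \<in> {x \<in> {1..n}. conj_offset \<nu> x mod int n = conj_offset \<nu> y' mod int n}"
    "y' \<in> {x \<in> {1..n}. conj_offset \<nu> x mod int n = conj_offset \<nu> y' mod int n}"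
    using assms(2-4) by auto
  ultimately have "y = z" "y' = z" by auto
  then show ?thesis by simp
qed

section \<open>Root segments as differences of prefix sums\<close>

lemma div_succ_eq:
  fixes y n :: int
  assumes "n > 0"
  shows "(y + 1) div n = y div n + of_bool ((y + 1) mod n = 0)"
proof -
  have y: "n * (y div n) + y mod n = y" by (rule mult_div_mod_eq)
  have r: "0 \<le> y mod n" "y mod n < n" using assms by simp_all
  show ?thesis
  proof (cases "y mod n + 1 = n")
    case True
    then have "y + 1 = n * (y div n) + n * 1" using y by linarith
    then have "y + 1 = n * (y div n + 1)" by (simp only: distrib_left)
    then show ?thesis using assms by simp
  next
    case False
    then have "y mod n + 1 < n" using r by simp
    moreover have "y + 1 = (y mod n + 1) + n * (y div n)" using y by linarith
    moreover have "0 \<le> y mod n + 1" using r by simp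
    ultimately have "(y + 1) div n = y div n" "(y + 1) mod n = y mod n + 1"
      using assms div_mult_self2[of n "y mod n + 1" "y div n"] mod_mult_self2[of "y mod n + 1" n "y div n"]
      by simp_all
    then show ?thesis using r by simp
  qed
qed

text \<open>Coefficientwise, \<open>alpha_prefix n q - alpha_prefix n p\<close> is the root
  \<open>\<alpha>\<^sub>p + \<dots> + \<alpha>\<^sub>q\<^sub>-\<^sub>1\<close>.\<close>
definition alpha_prefix :: "nat \<Rightarrow> int \<Rightarrow> rootlat" where
  "alpha_prefix n x = (\<lambda>k. if k < n then (x - int k - 1) div int n else 0)"

lemma alpha_of_nat: "i < n \<Longrightarrow> alpha n (int i) k = of_bool (k = i)"
  unfolding alpha_def by simp

lemma alpha_eq_zero:
  assumes "n > 0" "n \<le> k"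
  shows "alpha n t k = 0"
proof -
  have "nat (t mod int n) < n" using assms(1) by (simp add: nat_less_iff)
  then show ?thesis using assms(2) by (simp add: alpha_def)
qed

lemma alpha_mod_cong: "t mod int n = t' mod int n \<Longrightarrow> alpha n t = alpha n t'"
  unfolding alpha_def by simp

lemma alpha_prefix_succ:
  assumes "n > 0"
  shows "alpha_prefix n (x + 1) k = alpha_prefix n x k + alpha n x k"
proof (cases "k < n")
  case True
  have "x mod int n = int k mod int n \<longleftrightarrow> int n dvd x - int k"
    by (rule mod_eq_dvd_iff)
  then have "(x - int k) mod int n = 0 \<longleftrightarrow> x mod int n = int k"
    using True by (simp add: mod_eq_0_iff_dvd)
  then show ?thesis
    using True assms div_succ_eq[of "int n" "x - int k - 1"]
    by (auto simp: alpha_prefix_def alpha_def algebra_simps)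
qed (use assms alpha_eq_zero in \<open>simp add: alpha_prefix_def\<close>)

lemma sum_alpha_eq_alpha_prefix_diff:
  assumes "n > 0" "p \<le> q"
  shows "(\<Sum>t\<in>{p..q - 1}. alpha n t k) = alpha_prefix n q k - alpha_prefix n p k"
  using assms(2)
proof (induction q rule: int_ge_induct)
  case (step q)
  have "{p..q + 1 - 1} = insert q {p..q - 1}" using step.hyps by auto
  then show ?case using step.IH alpha_prefix_succ[OF assms(1), of q k] by simp
qed simp

lemma alpha_prefix_add_period:
  assumes "n > 0"
  shows "alpha_prefix n (x + u * int n) k = alpha_prefix n x k + u * delta n k"
proof -
  have "x + u * int n - int k - 1 = (x - int k - 1) + u * int n" by simp
  also have "\<dots> div int n = (x - int k - 1) div int n + u"
    using assms div_mult_self1[of "int n" "x - int k - 1" u] by simp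
  finally have "(x + u * int n - int k - 1) div int n = (x - int k - 1) div int n + u" .
  then show ?thesis unfolding alpha_prefix_def delta_def by simp
qed

lemma alpha_prefix_diff_add_periods:
  assumes "n > 0"
  shows "(\<lambda>k. alpha_prefix n (b + v * int n) k - alpha_prefix n (a + u * int n) k)
    = (\<lambda>k. alpha_prefix n b k - alpha_prefix n a k + (v - u) * delta n k)"
  unfolding alpha_prefix_add_period[OF assms] by (simp add: fun_eq_iff algebra_simps)

lemma beta_eq_alpha_prefix_diff:
  assumes "is_partition \<kappa>" "n > 0" "1 \<le> j"
  shows "beta n \<kappa> j
    = (\<lambda>k. alpha_prefix n (conj_offset \<kappa> j) k - alpha_prefix n (conj_offset \<kappa> (j + 1)) k)"
proof -
  have "conj \<kappa> (j + 1) \<le> conj \<kappa> j" by (rule conj_antimono[OF assms(1,3)])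
  then have "conj_offset \<kappa> (j + 1) \<le> conj_offset \<kappa> j" unfolding conj_offset_def by simp
  moreover have "int (conj \<kappa> (j + 1)) - int j = conj_offset \<kappa> (j + 1)"
    "int (conj \<kappa> j) - int j = conj_offset \<kappa> j - 1"
    unfolding conj_offset_def by simp_all
  ultimately show ?thesis
    unfolding beta_def using sum_alpha_eq_alpha_prefix_diff[OF assms(2)] by presburger
qed

lemma conj_offset_gap_bounds:
  assumes "is_partition \<kappa>" "minimal n \<kappa>" "j \<in> {1..n - 1}"
  shows "1 \<le> conj_offset \<kappa> j - conj_offset \<kappa> (j + 1)"
    and "conj_offset \<kappa> j - conj_offset \<kappa> (j + 1) \<le> int n - 1"
proof -
  have "conj \<kappa> (j + 1) \<le> conj \<kappa> j" using conj_antimono[OF assms(1)] assms(3) by simp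
  moreover have "conj \<kappa> j < conj \<kappa> (j + 1) + n - 1" using assms(2,3) unfolding minimal_def by blast
  ultimately show "1 \<le> conj_offset \<kappa> j - conj_offset \<kappa> (j + 1)"
    and "conj_offset \<kappa> j - conj_offset \<kappa> (j + 1) \<le> int n - 1"
    using assms(3) unfolding conj_offset_def by auto
qed

section \<open>The reflection \<open>r\<^sub>\<alpha>\<^sub>i\<close> on root segments\<close>

text \<open>The simple reflection \<open>s\<^sub>i\<close> of the affine symmetric group, acting on \<open>\<int>\<close> by exchanging
  \<open>i + kn\<close> and \<open>i + 1 + kn\<close>.\<close>
definition affine_swap :: "nat \<Rightarrow> nat \<Rightarrow> int \<Rightarrow> int" where
  "affine_swap n i x = (if x mod int n = int i then x + 1
     else if x mod int n = (int i + 1) mod int n then x - 1 else x)"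

lemma alpha_prefix_affine_swap:
  assumes "n > 0" "i < n"
  shows "alpha_prefix n (affine_swap n i x) k
    = alpha_prefix n x k + (affine_swap n i x - x) * alpha n (int i) k"
proof -
  consider (at_i) "x mod int n = int i"
    | (at_succ) "x mod int n \<noteq> int i" "x mod int n = (int i + 1) mod int n"
    | (other) "x mod int n \<noteq> int i" "x mod int n \<noteq> (int i + 1) mod int n"
    by blast
  then show ?thesis
  proof cases
    case at_i
    then have "alpha n x = alpha n (int i)" using assms(2) by (intro alpha_mod_cong) simp
    then show ?thesis using at_i alpha_prefix_succ[OF assms(1), of x k]
      by (simp add: affine_swap_def)
  next
    case at_succ
    then have "(x - 1) mod int n = int i mod int n"
      by (simp add: mod_eq_dvd_iff algebra_simps)
    then have "alpha n (x - 1) = alpha n (int i)" by (rule alpha_mod_cong)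
    then show ?thesis using at_succ alpha_prefix_succ[OF assms(1), of "x - 1" k]
      by (simp add: affine_swap_def)
  next
    case other
    then show ?thesis by (simp add: affine_swap_def)
  qed
qed

lemma cartan_eq_affine_swap_diff:
  assumes "n \<ge> 3" "i < n"
  shows "cartan n (nat (x mod int n)) i
    = (affine_swap n i x - x) - (affine_swap n i (x + 1) - (x + 1))"
proof -
  define r where "r = nat (x mod int n)"
  have r: "r < n" "x mod int n = int r" using assms(1) by (simp_all add: r_def nat_less_iff)
  have "(x + 1) mod int n = (int r + 1) mod int n" by (metis mod_add_left_eq r(2))
  then have x1: "(x + 1) mod int n = (if r + 1 = n then 0 else int r + 1)"
    using r(1) by (auto simp: add.commute)
  have succ_mod: "(m + 1) mod n = (if m + 1 = n then 0 else m + 1)" if "m < n" for m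
    using that by simp
  have i1: "(int i + 1) mod int n = (if i + 1 = n then 0 else int i + 1)"
    using assms(2) by (auto simp: add.commute)
  show ?thesis
    unfolding affine_swap_def cartan_def r_def[symmetric] r(2) x1 i1 succ_mod[OF r(1)] succ_mod[OF assms(2)]
    using assms r(1) by auto
qed

lemma form_alpha_of_nat:
  assumes "i < n"
  shows "form n b (alpha n (int i)) = (\<Sum>k<n. b k * cartan n k i)"
proof -
  have "(\<Sum>l<n. b k * alpha n (int i) l * cartan n k l) = b k * cartan n k i" for k
  proof -
    have "(\<Sum>l<n. b k * alpha n (int i) l * cartan n k l)
        = (\<Sum>l<n. if l = i then b k * cartan n k l else 0)"
      by (rule sum.cong) (simp_all add: alpha_of_nat[OF assms])
    also have "\<dots> = b k * cartan n k i" using assms by simp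
    finally show ?thesis .
  qed
  then show ?thesis unfolding form_def by simp
qed

lemma form_alpha_prefix_succ:
  assumes "n > 0" "i < n"
  shows "form n (alpha_prefix n (x + 1)) (alpha n (int i))
    = form n (alpha_prefix n x) (alpha n (int i)) + cartan n (nat (x mod int n)) i"
proof -
  have "(\<Sum>k<n. alpha n x k * cartan n k i)
      = (\<Sum>k<n. if k = nat (x mod int n) then cartan n k i else 0)"
    by (rule sum.cong) (simp_all add: alpha_def)
  also have "\<dots> = cartan n (nat (x mod int n)) i"
    using assms(1) by (simp add: nat_less_iff)
  finally have "(\<Sum>k<n. alpha n x k * cartan n k i) = cartan n (nat (x mod int n)) i" .
  then show ?thesis
    unfolding form_alpha_of_nat[OF assms(2)] alpha_prefix_succ[OF assms(1)]
    by (simp add: distrib_right sum.distrib)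
qed

lemma form_alpha_prefix_plus_swap_const:
  assumes "n \<ge> 3" "i < n"
  shows "form n (alpha_prefix n x) (alpha n (int i)) + (affine_swap n i x - x)
    = form n (alpha_prefix n 0) (alpha n (int i)) + affine_swap n i 0"
proof -
  define f where "f x = form n (alpha_prefix n x) (alpha n (int i)) + (affine_swap n i x - x)" for x
  have step: "f (x + 1) = f x" for x
    using form_alpha_prefix_succ[of n i x] cartan_eq_affine_swap_diff[OF assms, of x] assms
    unfolding f_def by simp
  have "f x = f 0"
  proof (induction x rule: int_induct[where k = 0])
    case (step1 x) then show ?case using step[of x] by simp
  next
    case (step2 x) then show ?case using step[of "x - 1"] by simp
  qed simp
  then show ?thesis unfolding f_def by simp
qed

lemma form_diff_left: "form n (\<lambda>k. b k - c k) a = form n b a - form n c a"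
  unfolding form_def by (simp add: left_diff_distrib sum_subtractf)

lemma refl_alpha_prefix_diff:
  assumes "n \<ge> 3" "i < n"
  shows "refl n (int i) (\<lambda>k. alpha_prefix n q k - alpha_prefix n p k)
    = (\<lambda>k. alpha_prefix n (affine_swap n i q) k - alpha_prefix n (affine_swap n i p) k)"
proof -
  have form: "form n (\<lambda>k. alpha_prefix n q k - alpha_prefix n p k) (alpha n (int i))
      = (affine_swap n i p - p) - (affine_swap n i q - q)"
    unfolding form_diff_left
    using form_alpha_prefix_plus_swap_const[OF assms, of q]
      form_alpha_prefix_plus_swap_const[OF assms, of p] by simp
  have "n > 0" using assms by simp
  show ?thesis
    unfolding refl_def form alpha_prefix_affine_swap[OF \<open>n > 0\<close> assms(2)]
    by (simp add: fun_eq_iff algebra_simps)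
qed

lemma mod_eq_gap_cases:
  fixes a b a' b' N :: int
  assumes "a' mod N = a mod N" "b' mod N = b mod N"
    and "1 \<le> b' - a'" "b' - a' \<le> N - 1" "-1 \<le> b - a" "b - a \<le> N"
  obtains u where "a' = a + u * N" "b' = b + u * N"
    | u where "a' = a + u * N" "b' = b + (u + 1) * N"
proof -
  have N: "N > 0" using assms(3,4) by simp
  have decomp: "y' = y + ((y' - y) div N) * N" if "y' mod N = y mod N" for y y' :: int
    using that div_mult_mod_eq[of "y' - y" N] by (simp add: mod_eq_dvd_iff dvd_eq_mod_eq_0)
  define u v where "u = (a' - a) div N" and "v = (b' - b) div N"
  have a': "a' = a + u * N" and b': "b' = b + v * N"
    unfolding u_def v_def using decomp assms(1,2) by blast+
  have "(v - u) * N = (b' - a') - (b - a)" unfolding a' b' by (simp add: algebra_simps)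
  then have gap: "- N < (v - u) * N" "(v - u) * N < 2 * N" using assms(3-6) by linarith+
  have "v - u \<ge> 0"
  proof (rule ccontr)
    assume "\<not> v - u \<ge> 0"
    then have "(v - u) * N \<le> (- 1) * N" using N mult_right_mono[of "v - u" "- 1" N] by simp
    then show False using gap by linarith
  qed
  moreover have "v - u \<le> 1"
  proof (rule ccontr)
    assume "\<not> v - u \<le> 1"
    then have "2 * N \<le> (v - u) * N" using N mult_right_mono[of 2 "v - u" N] by simp
    then show False using gap by linarith
  qed
  ultimately have "v = u \<or> v = u + 1" by auto
  then show ?thesis using that a' b' by auto
qed

text \<open>The excluded configuration is the only one in which \<open>s\<^sub>i\<close> moves both ends of
  \<open>[p, q]\<close> towards each other.\<close>
lemma affine_swap_diff_bounds:
  assumes "1 \<le> q - p" "q - p \<le> int n - 1"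
    and "\<not> (q mod int n = int i \<and> p mod int n = (int i + 1) mod int n)"
  shows "- 1 \<le> affine_swap n i q - affine_swap n i p" "affine_swap n i q - affine_swap n i p \<le> int n"
  using assms unfolding affine_swap_def by auto

lemma refl_alpha_prefix_diff_cases:
  assumes "n \<ge> 3" "i < n"
    and "p' mod int n = affine_swap n i p mod int n" "q' mod int n = affine_swap n i q mod int n"
    and "1 \<le> q - p" "q - p \<le> int n - 1" "1 \<le> q' - p'" "q' - p' \<le> int n - 1"
    and "\<not> (q mod int n = int i \<and> p mod int n = (int i + 1) mod int n)"
  defines "r \<equiv> refl n (int i) (\<lambda>k. alpha_prefix n q k - alpha_prefix n p k)"
  shows "(\<lambda>k. alpha_prefix n q' k - alpha_prefix n p' k) = r
    \<or> (\<lambda>k. alpha_prefix n q' k - alpha_prefix n p' k) = qadd r (delta n)"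
proof -
  have n: "n > 0" using assms(1) by simp
  have r: "r = (\<lambda>k. alpha_prefix n (affine_swap n i q) k - alpha_prefix n (affine_swap n i p) k)"
    unfolding r_def by (rule refl_alpha_prefix_diff[OF assms(1,2)])
  from mod_eq_gap_cases[OF assms(3,4,7,8) affine_swap_diff_bounds[OF assms(5,6,9)]]
  show ?thesis
  proof cases
    case (1 u)
    then show ?thesis unfolding 1 r alpha_prefix_diff_add_periods[OF n] by simp
  next
    case (2 u)
    then show ?thesis unfolding 2 r alpha_prefix_diff_add_periods[OF n] qadd_def by simp
  qed
qed

section \<open>The permutation \<open>\<sigma>\<^sub>\<nu>\<close>\<close>

lemma rep_eq_iff:
  assumes "n > 0"
  shows "rep n a = rep n b \<longleftrightarrow> a mod int n = b mod int n"
proof -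
  have "0 \<le> (a - 1) mod int n" "0 \<le> (b - 1) mod int n" using assms by auto
  then have "rep n a = rep n b \<longleftrightarrow> (a - 1) mod int n = (b - 1) mod int n"
    unfolding rep_def by (simp add: eq_nat_nat_iff)
  also have "\<dots> \<longleftrightarrow> a mod int n = b mod int n" by (simp add: mod_eq_dvd_iff)
  finally show ?thesis .
qed

lemma rep_in_range:
  assumes "n > 0"
  shows "rep n a \<in> {1..n}"
proof -
  have "nat ((a - 1) mod int n) < n" using assms by (simp add: nat_less_iff)
  then show ?thesis unfolding rep_def by simp
qed

lemma rep_of_nat:
  assumes "v \<in> {1..n}"
  shows "rep n (int v) = v"
proof -
  have "(int v - 1) mod int n = int v - 1" using assms by simp
  moreover have "nat (int v - 1) + 1 = v" using assms by (simp add: nat_diff_distrib)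
  ultimately show ?thesis unfolding rep_def by simp
qed

lemma rep_eq_of_nat_iff:
  assumes "v \<in> {1..n}"
  shows "rep n x = v \<longleftrightarrow> x mod int n = int v mod int n"
  using rep_eq_iff[of n x "int v"] rep_of_nat[OF assms] assms by simp

lemma rep_eq_succ_iff:
  assumes "i + 1 \<in> {1..n}"
  shows "rep n x = i + 1 \<longleftrightarrow> x mod int n = (int i + 1) mod int n"
  using rep_eq_of_nat_iff[OF assms, of x] by (simp add: add.commute)

lemma sigma_eq_rep_conj_offset:
  "k \<in> {1..n} \<Longrightarrow> sigma n \<nu> k = rep n (conj_offset \<nu> (n + 1 - k))"
  unfolding sigma_def conj_offset_def by auto

lemma sigma_outside: "k \<notin> {1..n} \<Longrightarrow> sigma n \<nu> k = k"
  unfolding sigma_def by auto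

lemma inj_sigma:
  assumes "\<nu> \<in> P0 n"
  shows "inj (sigma n \<nu>)"
proof
  have range: "sigma n \<nu> k \<in> {1..n} \<longleftrightarrow> k \<in> {1..n}" for k
  proof (cases "k \<in> {1..n}")
    case True
    then have "n > 0" by simp
    with True show ?thesis using rep_in_range[of n "conj_offset \<nu> (n + 1 - k)"]
      by (simp add: sigma_eq_rep_conj_offset)
  next
    case False
    then show ?thesis by (simp add: sigma_outside)
  qed
  fix k k' assume eq: "sigma n \<nu> k = sigma n \<nu> k'"
  have k_iff: "k \<in> {1..n} \<longleftrightarrow> k' \<in> {1..n}"
    using range[of k] range[of k'] unfolding eq by (simp only:)
  show "k = k'"
  proof (cases "k \<in> {1..n}")
    case True
    with k_iff have k': "k' \<in> {1..n}" by simp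
    have "rep n (conj_offset \<nu> (n + 1 - k)) = rep n (conj_offset \<nu> (n + 1 - k'))"
      using eq True k' by (simp add: sigma_eq_rep_conj_offset)
    then have "conj_offset \<nu> (n + 1 - k) mod int n = conj_offset \<nu> (n + 1 - k') mod int n"
      using True by (simp add: rep_eq_iff)
    moreover have "n + 1 - k \<in> {1..n}" "n + 1 - k' \<in> {1..n}" using True k' by auto
    ultimately have "n + 1 - k = n + 1 - k'"
      using conj_offset_mod_inj[OF assms] by blast
    with True k' show ?thesis by auto
  next
    case False
    with k_iff have "k' \<notin> {1..n}" by simp
    with False eq show ?thesis by (simp add: sigma_outside)
  qed
qed

lemma rep_affine_swap:
  assumes "1 \<le> i" "i < n"
  shows "rep n (affine_swap n i x) = transpose i (i + 1) (rep n x)"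
proof -
  have i: "i \<in> {1..n}" "i + 1 \<in> {1..n}" using assms by auto
  have rep_i: "rep n y = i \<longleftrightarrow> y mod int n = int i" for y
    using rep_eq_of_nat_iff[OF i(1)] assms by simp
  note rep_i1 = rep_eq_succ_iff[OF i(2)]
  consider (at_i) "x mod int n = int i"
    | (at_succ) "x mod int n \<noteq> int i" "x mod int n = (int i + 1) mod int n"
    | (other) "x mod int n \<noteq> int i" "x mod int n \<noteq> (int i + 1) mod int n"
    by blast
  then show ?thesis
  proof cases
    case at_i
    then have "(x + 1) mod int n = (int i + 1) mod int n" by (metis mod_add_left_eq)
    then have "rep n x = i" "rep n (x + 1) = i + 1"
      using at_i by (simp_all only: rep_i rep_i1)
    then show ?thesis using at_i by (simp add: affine_swap_def)
  next
    case at_succ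
    then have "(x - 1) mod int n = int i mod int n"
      by (simp add: mod_eq_dvd_iff algebra_simps)
    then have "rep n x = i + 1" "rep n (x - 1) = i"
      using at_succ assms by (simp_all only: rep_i rep_i1) simp
    then show ?thesis using at_succ by (simp add: affine_swap_def)
  next
    case other
    then have "rep n x \<noteq> i" "rep n x \<noteq> i + 1"
      by (simp_all only: rep_i rep_i1) simp_all
    then show ?thesis using other by (simp add: affine_swap_def)
  qed
qed

lemma conj_offset_mod_affine_swap:
  assumes "1 \<le> i" "i < n" "sigma n \<mu> = transpose i (i + 1) \<circ> sigma n \<nu>" "m \<in> {1..n}"
  shows "conj_offset \<mu> m mod int n = affine_swap n i (conj_offset \<nu> m) mod int n"
proof -
  have k: "n + 1 - m \<in> {1..n}" "n + 1 - (n + 1 - m) = m" using assms(4) by auto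
  have "sigma n \<kappa> (n + 1 - m) = rep n (conj_offset \<kappa> m)" for \<kappa>
    using sigma_eq_rep_conj_offset[OF k(1), of \<kappa>] k(2) by simp
  then have "rep n (conj_offset \<mu> m) = transpose i (i + 1) (rep n (conj_offset \<nu> m))"
    using fun_cong[OF assms(3), of "n + 1 - m"] by simp
  also have "\<dots> = rep n (affine_swap n i (conj_offset \<nu> m))"
    by (simp add: rep_affine_swap[OF assms(1,2)])
  finally show ?thesis using rep_eq_iff assms(2) by simp
qed

lemma inv_sigma_rep_conj_offset:
  assumes "\<nu> \<in> P0 n" "m \<in> {1..n}"
  shows "inv (sigma n \<nu>) (rep n (conj_offset \<nu> m)) = n + 1 - m"
proof (rule inv_f_eq[OF inj_sigma[OF assms(1)]])
  have "n + 1 - m \<in> {1..n}" "n + 1 - (n + 1 - m) = m" using assms(2) by auto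
  then show "sigma n \<nu> (n + 1 - m) = rep n (conj_offset \<nu> m)"
    by (simp add: sigma_eq_rep_conj_offset)
qed

lemma conj_offset_no_descent:
  assumes "\<nu> \<in> P0 n" "1 \<le> i" "i < n" "inv (sigma n \<nu>) i < inv (sigma n \<nu>) (i + 1)"
    and "j \<in> {1..n - 1}"
  shows "\<not> (conj_offset \<nu> j mod int n = int i
            \<and> conj_offset \<nu> (j + 1) mod int n = (int i + 1) mod int n)"
proof
  assume ends: "conj_offset \<nu> j mod int n = int i
            \<and> conj_offset \<nu> (j + 1) mod int n = (int i + 1) mod int n"
  have i: "i \<in> {1..n}" "i + 1 \<in> {1..n}" and j: "j \<in> {1..n}" "j + 1 \<in> {1..n}"
    using assms(2,3,5) by auto
  have "rep n (conj_offset \<nu> j) = i" "rep n (conj_offset \<nu> (j + 1)) = i + 1"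
    using ends assms(3) by (simp_all only: rep_eq_of_nat_iff[OF i(1)] rep_eq_succ_iff[OF i(2)]) simp
  then have "inv (sigma n \<nu>) i = n + 1 - j" "inv (sigma n \<nu>) (i + 1) = n - j"
    using inv_sigma_rep_conj_offset[OF assms(1) j(1)] inv_sigma_rep_conj_offset[OF assms(1) j(2)]
    by simp_all
  then show False using assms(4) j by simp
qed

theorem mainTheorem12:
  fixes n i :: nat and \<nu> \<mu> :: "nat list"
  assumes "n \<ge> 3"
    and "\<nu> \<in> P0 n" and "minimal n \<nu>"
    and "1 \<le> i" and "i \<le> n - 1"
    and "inv (sigma n \<nu>) i < inv (sigma n \<nu>) (i + 1)"
    and "\<mu> \<in> P0 n" and "minimal n \<mu>"
    and "sigma n \<mu> = transpose i (i + 1) \<circ> sigma n \<nu>"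
  shows "\<forall>j\<in>{1..n-1}. beta n \<mu> j = refl n (int i) (beta n \<nu> j)
           \<or> beta n \<mu> j = qadd (refl n (int i) (beta n \<nu> j)) (delta n)"
proof
  fix j assume j: "j \<in> {1..n - 1}"
  have n: "n > 0" and i: "1 \<le> i" "i < n" and j1: "1 \<le> j" "j \<in> {1..n}" "j + 1 \<in> {1..n}"
    using assms(1,4,5) j by auto
  have \<nu>: "is_partition \<nu>" and \<mu>: "is_partition \<mu>" using assms(2,7) unfolding P0_def by auto
  show "beta n \<mu> j = refl n (int i) (beta n \<nu> j)
      \<or> beta n \<mu> j = qadd (refl n (int i) (beta n \<nu> j)) (delta n)"
    unfolding beta_eq_alpha_prefix_diff[OF \<nu> n j1(1)] beta_eq_alpha_prefix_diff[OF \<mu> n j1(1)]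
  proof (rule refl_alpha_prefix_diff_cases[OF assms(1) i(2)])
    show "conj_offset \<mu> (j + 1) mod int n = affine_swap n i (conj_offset \<nu> (j + 1)) mod int n"
      "conj_offset \<mu> j mod int n = affine_swap n i (conj_offset \<nu> j) mod int n"
      using conj_offset_mod_affine_swap[OF i assms(9)] j1 by simp_all
  qed (use conj_offset_gap_bounds[OF \<nu> assms(3) j] conj_offset_gap_bounds[OF \<mu> assms(8) j]
        conj_offset_no_descent[OF assms(2) i assms(6) j] in simp_all)
qed

end
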